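(* Let $p,q$ be complex numbers with $|p|<1$, and let $a,b,c,A,B,C$ be nonzero complex numbers such that all expressions below are well defined. Then for every $n=0,1,2,\ldots$, \begin{align*} &\sum_{k=0}^n\frac{\theta(aq^{2k};p)}{\theta(a;p)}\, \frac{(a,b,c,a/(bc);q,p)_k}{(q,aq/b,aq/c,bcq;q,p)_k}\, \frac{(q^{-n},\,Bq^{-n}/A,\,Cq^{-n}/A,\,q^{-n}/(BC);q,p)_k}{(q^{-n}/A,\,q^{-n}/B,\,q^{-n}/C,\,BCq^{-n}/A;q,p)_k}\,q^k\\ &=\frac{(aq,bq,cq,aq/(bc),Aq/B,Aq/C,BCq;q,p)_n}{(Aq,Bq,Cq,Aq/(BC),aq/b,aq/c,bcq;q,p)_n}\\ &\quad\times\sum_{k=0}^n\frac{\theta(Aq^{2k};p)}{\theta(A;p)}\, \frac{(A,B,C,A/(BC);q,p)_k}{(q,Aq/B,Aq/C,BCq;q,p)_k}\, \frac{(q^{-n},\,bq^{-n}/a,\,cq^{-n}/a,\,q^{-n}/(bc);q,p)_k}{(q^{-n}/a,\,q^{-n}/b,\,q^{-n}/c,\,bcq^{-n}/a;q,p)_k}\,q^k. \end{align*}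
   Context: For $|p|<1$ and $x\neq 0$, $\theta(x;p)=(x;p)_\infty(p/x;p)_\infty$ where $(x;p)_\infty=\prod_{k\ge 0}(1-xp^k)$, and $\theta(x_1,\dots,x_m;p)=\prod_{i=1}^m\theta(x_i;p)$. For $a\neq 0$ and integer $n\ge 0$, $(a;q,p)_n=\prod_{k=0}^{n-1}\theta(aq^k;p)$ (empty product $=1$), and $(a_1,\dots,a_m;q,p)_n=\prod_{i=1}^m(a_i;q,p)_n$. *)

theory Defs
  imports "HOL-Analysis.Analysis"
begin

definition qpoch_inf :: "complex \<Rightarrow> complex \<Rightarrow> complex" where
  "qpoch_inf x p = (\<Prod>k. (1 - x * p ^ k))"

definition theta :: "complex \<Rightarrow> complex \<Rightarrow> complex" where
  "theta x p = qpoch_inf x p * qpoch_inf (p / x) p"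

definition epoch :: "complex \<Rightarrow> complex \<Rightarrow> complex \<Rightarrow> nat \<Rightarrow> complex" where
  "epoch a q p n = (\<Prod>k<n. theta (a * q ^ k) p)"

definition epochs :: "complex list \<Rightarrow> complex \<Rightarrow> complex \<Rightarrow> nat \<Rightarrow> complex" where
  "epochs as q p n = prod_list (map (\<lambda>a. epoch a q p n) as)"

end

theory Submission
  imports Defs "HOL-Complex_Analysis.Complex_Analysis"
begin

text \<open>
  Write \<open>S\<^sub>a(m)\<close> for \<open>(aq,bq,cq,aq/(bc);q,p)\<^sub>m / (q,aq/b,aq/c,bcq;q,p)\<^sub>m\<close>.
  The three-term addition formula for \<open>\<theta>\<close> makes the \<open>k\<close>-th very-well-poised term
  on the left a backward difference \<open>S\<^sub>a(k) - S\<^sub>a(k - 1)\<close>. Reading the factors of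
  \<open>(z;q,p)\<^sub>n\<close> backwards, using \<open>\<theta>(1/x;p) = -\<theta>(x;p)/x\<close>, turns the remaining factor of
  the summand into \<open>S\<^sub>A(n - k)/S\<^sub>A(n)\<close>. So the left side is
  \<open>\<Sum>\<^sub>k (S\<^sub>a(k) - S\<^sub>a(k - 1)) S\<^sub>A(n - k) / S\<^sub>A(n)\<close> and the right side is the same with
  \<open>S\<^sub>a\<close> and \<open>S\<^sub>A\<close> exchanged in the numerator; these agree since
  \<open>\<Sum>\<^sub>k (F(k) - F(k - 1)) G(n - k)\<close> is symmetric in \<open>F\<close> and \<open>G\<close>.

  The addition formula is proved with Liouville's theorem: a quotient of theta products
  with the same quasi-periodicity under \<open>x \<mapsto> px\<close> and only removable singularities
  is constant.
\<close>

section \<open>The theta function\<close>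

lemma qpoch_inf_convergent_prod:
  fixes x p :: complex
  assumes "norm p < 1"
  shows "convergent_prod (\<lambda>k. 1 - x * p ^ k)"
proof -
  have "summable (\<lambda>k. norm x * norm p ^ k)"
    using assms by (intro summable_mult summable_geometric) auto
  then have "abs_convergent_prod (\<lambda>k. 1 - x * p ^ k)"
    by (subst abs_convergent_prod_conv_summable) (simp add: norm_mult norm_power)
  then show ?thesis
    by (rule abs_convergent_prod_imp_convergent_prod)
qed

lemma qpoch_inf_has_prod:
  assumes "norm p < 1"
  shows "(\<lambda>k. 1 - x * p ^ k) has_prod qpoch_inf x p"
  unfolding qpoch_inf_def using qpoch_inf_convergent_prod[OF assms] by blast

lemma qpoch_inf_unroll:
  assumes "norm p < 1"
  shows "qpoch_inf x p = (1 - x) * qpoch_inf (p * x) p"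
proof -
  have "(\<lambda>k. 1 - x * p ^ k) has_prod ((\<Prod>k<1. 1 - x * p ^ k) * (\<Prod>k. 1 - x * p ^ (k + 1)))"
    by (rule has_prod_ignore_initial_segment'[OF qpoch_inf_convergent_prod[OF assms]])
  moreover have "(\<Prod>k. 1 - x * p ^ (k + 1)) = qpoch_inf (p * x) p"
    unfolding qpoch_inf_def by (simp add: mult_ac)
  ultimately have "(\<lambda>k. 1 - x * p ^ k) has_prod ((1 - x) * qpoch_inf (p * x) p)"
    by simp
  then show ?thesis
    using has_prod_unique2[OF qpoch_inf_has_prod[OF assms]] by blast
qed

lemma qpoch_inf_eq_0_iff:
  assumes "norm p < 1"
  shows "qpoch_inf x p = 0 \<longleftrightarrow> (\<exists>k. x * p ^ k = 1)"
proof -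
  have "0 = 1 - x * p ^ k \<longleftrightarrow> x * p ^ k = 1" for k
    by auto
  then show ?thesis
    using has_prod_eq_0_iff[OF qpoch_inf_has_prod[OF assms]] by (simp add: image_iff)
qed

lemma qpoch_inf_nome_nonzero:
  assumes "norm p < 1"
  shows "qpoch_inf p p \<noteq> 0"
proof
  assume "qpoch_inf p p = 0"
  then obtain k where "p ^ Suc k = 1"
    using qpoch_inf_eq_0_iff[OF assms] by auto
  then have "norm p ^ Suc k = 1"
    by (metis norm_one norm_power)
  moreover have "norm p ^ Suc k \<le> norm p"
    using assms by (simp add: mult_left_le power_le_one)
  ultimately show False
    using assms by simp
qed

lemma qpoch_inf_nome_0: "qpoch_inf x 0 = 1 - x"
  using qpoch_inf_unroll[of 0 x] unfolding qpoch_inf_def by simp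

lemma uniform_limit_qpoch_inf:
  assumes "norm p < 1"
  shows "uniform_limit (cball 0 R) (\<lambda>N x. \<Prod>k<N. 1 - x * p ^ k) (\<lambda>x. qpoch_inf x p) sequentially"
proof -
  have "uniformly_convergent_on (cball 0 R) (\<lambda>N x. \<Prod>k<N. 1 - x * p ^ k)"
  proof (rule uniformly_convergent_on_prod')
    show "uniformly_convergent_on (cball 0 R) (\<lambda>N x. \<Sum>k<N. norm (1 - x * p ^ k - 1))"
    proof (rule Weierstrass_m_test')
      show "norm (norm (1 - x * p ^ k - 1)) \<le> R * norm p ^ k" if "x \<in> cball 0 R" for k x
        using that by (simp add: norm_mult norm_power mult_right_mono)
      show "summable (\<lambda>k. R * norm p ^ k)"
        using assms by (intro summable_mult summable_geometric) auto
    qed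
    show "continuous_on (cball 0 R) (\<lambda>x. 1 - x * p ^ k)" for k
      by (intro continuous_intros)
  qed simp
  then obtain g where g: "uniform_limit (cball 0 R) (\<lambda>N x. \<Prod>k<N. 1 - x * p ^ k) g sequentially"
    by (auto simp: uniformly_convergent_on_def)
  moreover have "qpoch_inf x p = g x" if "x \<in> cball 0 R" for x
  proof -
    have "(\<lambda>N. \<Prod>k<N. 1 - x * p ^ k) \<longlonglongrightarrow> qpoch_inf x p"
      using has_prod_imp_tendsto' qpoch_inf_has_prod[OF assms] by blast
    moreover have "(\<lambda>N. \<Prod>k<N. 1 - x * p ^ k) \<longlonglongrightarrow> g x"
      using tendsto_uniform_limitI[OF g that] .
    ultimately show ?thesis
      by (rule LIMSEQ_unique)
  qed
  ultimately show ?thesis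
    by (subst uniform_limit_cong'[where g = "\<lambda>N x. \<Prod>k<N. 1 - x * p ^ k" and i = g]) simp_all
qed

lemma holomorphic_on_qpoch_inf:
  assumes "norm p < 1"
  shows "(\<lambda>x. qpoch_inf x p) holomorphic_on S"
proof (rule holomorphic_on_subset[of _ UNIV])
  show "(\<lambda>x. qpoch_inf x p) holomorphic_on UNIV"
  proof (rule holomorphic_uniform_sequence)
    fix z :: complex
    have "uniform_limit (cball z 1) (\<lambda>N x. \<Prod>k<N. 1 - x * p ^ k) (\<lambda>x. qpoch_inf x p) sequentially"
      by (rule uniform_limit_on_subset[OF uniform_limit_qpoch_inf[OF assms, of "norm z + 1"]])
         (simp add: cball_subset_cball_iff)
    then show "\<exists>d>0. cball z d \<subseteq> UNIV \<and>
        uniform_limit (cball z d) (\<lambda>N x. \<Prod>k<N. 1 - x * p ^ k) (\<lambda>x. qpoch_inf x p) sequentially"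
      by (intro exI[of _ 1]) auto
    show "(\<lambda>x. \<Prod>k<N. 1 - x * p ^ k) holomorphic_on UNIV" for N
      by (intro holomorphic_on_prod holomorphic_on_diff holomorphic_on_const holomorphic_on_mult holomorphic_on_ident)
  qed simp
qed simp

lemma theta_inverse:
  assumes "norm p < 1" "x \<noteq> 0"
  shows "theta (inverse x) p = - theta x p / x"
proof -
  have "theta (inverse x) p = (1 - inverse x) * qpoch_inf (p / x) p * qpoch_inf (p * x) p"
    using qpoch_inf_unroll[OF assms(1), of "inverse x"] by (simp add: theta_def divide_inverse mult_ac)
  also have "\<dots> = - ((1 - x) * qpoch_inf (p * x) p * qpoch_inf (p / x) p) / x"
    using assms(2) by (simp add: field_simps)
  also have "\<dots> = - theta x p / x"
    using qpoch_inf_unroll[OF assms(1), of x] by (simp add: theta_def)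
  finally show ?thesis .
qed

lemma theta_times_nome:
  assumes "norm p < 1" "p \<noteq> 0" "x \<noteq> 0"
  shows "theta (p * x) p = - theta x p / x"
proof -
  have "p / (p * x) = inverse x" "p / inverse x = p * x"
    using assms(2) by (simp_all add: field_simps)
  then have "theta (p * x) p = theta (inverse x) p"
    unfolding theta_def by (simp only: mult.commute)
  then show ?thesis
    using theta_inverse[OF assms(1,3)] by simp
qed

lemma theta_1 [simp]:
  assumes "norm p < 1"
  shows "theta 1 p = 0"
  using qpoch_inf_unroll[OF assms, of 1] by (simp add: theta_def)

lemma theta_nome_0:
  assumes "x \<noteq> 0"
  shows "theta x 0 = 1 - x"
  using assms by (simp add: theta_def qpoch_inf_nome_0)

lemma theta_eq_0_imp_power_int:
  assumes "norm p < 1" "p \<noteq> 0" "x \<noteq> 0" "theta x p = 0"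
  shows "\<exists>k::int. x = p powi k"
proof -
  obtain k where "x * p ^ k = 1 \<or> p / x * p ^ k = 1"
    using assms(4) qpoch_inf_eq_0_iff[OF assms(1)] by (auto simp: theta_def)
  then have "x = inverse (p ^ k) \<or> x = p ^ Suc k"
    using assms(2,3) by (auto simp: field_simps)
  then show ?thesis
    by (metis power_int_minus power_int_of_nat)
qed

lemma holomorphic_on_theta:
  assumes "norm p < 1" "f holomorphic_on S" "\<And>x. x \<in> S \<Longrightarrow> f x \<noteq> 0"
  shows "(\<lambda>x. theta (f x) p) holomorphic_on S"
  unfolding theta_def using assms
  by (intro holomorphic_intros holomorphic_on_compose[OF _ holomorphic_on_qpoch_inf, unfolded o_def])

lemma theta_has_field_derivative_at_1:
  assumes "norm p < 1"
  shows "((\<lambda>x. theta x p) has_field_derivative - (qpoch_inf p p)\<^sup>2) (at 1)"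
proof -
  define R where "R x = qpoch_inf (p * x) p * qpoch_inf (p / x) p" for x
  have theta_eq: "(\<lambda>x. theta x p) = (\<lambda>x. (1 - x) * R x)"
    unfolding theta_def R_def by (subst qpoch_inf_unroll[OF assms]) (simp add: mult.assoc)
  have "R holomorphic_on -{0}"
    unfolding R_def
    by (intro holomorphic_intros holomorphic_on_compose[OF _ holomorphic_on_qpoch_inf[OF assms], unfolded o_def]) auto
  then have "(R has_field_derivative deriv R 1) (at 1)"
    by (intro holomorphic_derivI) auto
  then have "((\<lambda>x. (1 - x) * R x) has_field_derivative - R 1) (at 1)"
    by (rule DERIV_mult[OF DERIV_diff[OF DERIV_const DERIV_ident], THEN DERIV_cong]) simp
  moreover have "R 1 = (qpoch_inf p p)\<^sup>2"
    by (simp add: R_def power2_eq_square)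
  ultimately show ?thesis
    unfolding theta_eq by simp
qed

section \<open>Functions with quasi-period \<open>p\<close>\<close>

lemma deriv_quasi_periodic_at_zero:
  fixes F :: "complex \<Rightarrow> complex"
  assumes hol: "F holomorphic_on -{0}" and qp: "\<And>z. z \<noteq> 0 \<Longrightarrow> F (p * z) = F z / z\<^sup>2"
    and "p \<noteq> 0" "z \<noteq> 0" "F z = 0"
  shows "deriv F (p * z) = deriv F z / (p * z\<^sup>2)"
proof -
  have dF: "(F has_field_derivative deriv F w) (at w)" if "w \<noteq> 0" for w
    using hol that by (intro holomorphic_derivI) auto
  have "((\<lambda>w. F (p * w)) has_field_derivative deriv F (p * z) * p) (at z)"
    using DERIV_chain2[OF dF DERIV_cmult[OF DERIV_ident]] assms by simp
  moreover have "((\<lambda>w. F w / w\<^sup>2) has_field_derivative deriv F z / z\<^sup>2) (at z)"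
    by (rule DERIV_divide[OF dF[OF \<open>z \<noteq> 0\<close>] DERIV_power[OF DERIV_ident], THEN DERIV_cong])
       (use assms in \<open>simp_all add: field_simps power2_eq_square\<close>)
  then have "((\<lambda>w. F (p * w)) has_field_derivative deriv F z / z\<^sup>2) (at z)"
    by (rule has_field_derivative_transform_within_open[of _ _ _ "-{0}"]) (use assms in auto)
  ultimately have "deriv F (p * z) * p = deriv F z / z\<^sup>2"
    by (rule DERIV_unique)
  then show ?thesis
    using assms by (simp add: field_simps)
qed

lemma power_int_mult_induct:
  fixes p :: "'a :: field"
  assumes "p \<noteq> 0" "P z"
    and up: "\<And>w. P w \<Longrightarrow> P (p * w)" and down: "\<And>w. P w \<Longrightarrow> P (w / p)"
  shows "P (p powi k * z)"
proof (induction k rule: int_induct[where k = 0])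
  case (step1 i)
  have "p powi (i + 1) * z = p * (p powi i * z)"
    using assms(1) by (simp add: power_int_add)
  moreover have "P (p * (p powi i * z))"
    using up[OF step1(2)] .
  ultimately show ?case
    by metis
next
  case (step2 i)
  have "p powi (i - 1) * z = p powi i * z / p"
    using assms(1) by (simp add: power_int_diff)
  moreover have "P (p powi i * z / p)"
    using down[OF step2(2)] .
  ultimately show ?case
    by metis
qed (use assms in simp)

lemma quasi_periodic_zero_power_int:
  fixes F :: "complex \<Rightarrow> complex"
  assumes hol: "F holomorphic_on -{0}" and qp: "\<And>z. z \<noteq> 0 \<Longrightarrow> F (p * z) = F z / z\<^sup>2"
    and p: "p \<noteq> 0" and z: "z \<noteq> 0" "F z = 0"
  shows "F (p powi k * z) = 0 \<and> (deriv F (p powi k * z) = 0 \<longleftrightarrow> deriv F z = 0)"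
proof -
  define P where "P w \<longleftrightarrow> w \<noteq> 0 \<and> F w = 0 \<and> (deriv F w = 0 \<longleftrightarrow> deriv F z = 0)" for w
  have "P (p * w)" if "P w" for w
  proof -
    have w: "w \<noteq> 0" "F w = 0"
      using that by (auto simp: P_def)
    have "F (p * w) = 0"
      using qp[OF w(1)] w(2) by simp
    moreover have "deriv F (p * w) = deriv F w / (p * w\<^sup>2)"
      using deriv_quasi_periodic_at_zero[OF hol qp p w] .
    ultimately show ?thesis
      using that p w(1) by (auto simp: P_def)
  qed
  moreover have "P (w / p)" if "P w" for w
  proof -
    have w: "w / p \<noteq> 0" "p * (w / p) = w"
      using that p by (auto simp: P_def)
    have "F w = F (w / p) / (w / p)\<^sup>2"
      using qp[OF w(1)] by (simp only: w(2))
    then have "F (w / p) = 0"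
      using that w(1) by (auto simp: P_def)
    moreover have "deriv F (p * (w / p)) = deriv F (w / p) / (p * (w / p)\<^sup>2)"
      by (rule deriv_quasi_periodic_at_zero[OF hol qp p w(1) \<open>F (w / p) = 0\<close>])
    ultimately show ?thesis
      using that p w by (auto simp: P_def)
  qed
  moreover have "P z"
    using z by (simp add: P_def)
  ultimately have "P (p powi k * z)"
    using power_int_mult_induct[OF p, of P] by blast
  then show ?thesis
    by (simp add: P_def)
qed

lemma field_differentiable_quotient_at_simple_zero:
  fixes N D :: "complex \<Rightarrow> complex"
  assumes "N holomorphic_on S" "D holomorphic_on S" "open S" "z \<in> S"
    and "N z = 0" "D z = 0" "deriv D z \<noteq> 0"
  shows "(\<lambda>w. if D w = 0 then deriv N w / deriv D w else N w / D w) field_differentiable (at z)"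
proof -
  define N1 where "N1 = (\<lambda>w. if w = z then deriv N z else (N w - N z) / (w - z))"
  define D1 where "D1 = (\<lambda>w. if w = z then deriv D z else (D w - D z) / (w - z))"
  have N1: "N1 holomorphic_on S" and D1: "D1 holomorphic_on S"
    unfolding N1_def D1_def using pole_lemma_open assms by blast+
  then have "isCont D1 z"
    using assms by (meson continuous_on_eq_continuous_at holomorphic_on_imp_continuous_on)
  moreover have "D1 z \<noteq> 0"
    using assms by (simp add: D1_def)
  ultimately obtain e where "e > 0" and e: "\<And>w. dist w z < e \<Longrightarrow> D1 w \<noteq> 0"
    using continuous_at_avoid by (metis dist_commute)
  obtain e' where "e' > 0" "ball z e' \<subseteq> S"
    using assms openE by blast
  define B where "B = ball z (min e e')"
  have B: "open B" "z \<in> B" "B \<subseteq> S" "\<And>w. w \<in> B \<Longrightarrow> D1 w \<noteq> 0"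
    using \<open>e > 0\<close> \<open>e' > 0\<close> \<open>ball z e' \<subseteq> S\<close> e by (auto simp: B_def dist_commute)
  have "(\<lambda>w. N1 w / D1 w) holomorphic_on B"
    using B by (intro holomorphic_on_divide holomorphic_on_subset[OF N1] holomorphic_on_subset[OF D1])
  moreover have "N1 w / D1 w = (if D w = 0 then deriv N w / deriv D w else N w / D w)" if "w \<in> B" for w
    using assms B(4)[OF that] by (cases "w = z") (auto simp: N1_def D1_def)
  ultimately have "(\<lambda>w. if D w = 0 then deriv N w / deriv D w else N w / D w) holomorphic_on B"
    by (rule holomorphic_transform)
  then show ?thesis
    using B holomorphic_on_imp_differentiable_at by blast
qed

lemma holomorphic_on_quotient_simple_zeros:
  fixes N D :: "complex \<Rightarrow> complex"
  assumes hol: "N holomorphic_on S" "D holomorphic_on S" and "open S"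
    and simple: "\<And>z. z \<in> S \<Longrightarrow> D z = 0 \<Longrightarrow> N z = 0 \<and> deriv D z \<noteq> 0"
  shows "(\<lambda>w. if D w = 0 then deriv N w / deriv D w else N w / D w) holomorphic_on S"
proof (rule holomorphic_onI[OF field_differentiable_at_within])
  fix z assume "z \<in> S"
  show "(\<lambda>w. if D w = 0 then deriv N w / deriv D w else N w / D w) field_differentiable at z"
  proof (cases "D z = 0")
    case True
    then show ?thesis
      using simple \<open>z \<in> S\<close> assms by (intro field_differentiable_quotient_at_simple_zero) auto
  next
    case False
    define U where "U = S \<inter> D -` (-{0})"
    have "open U"
      unfolding U_def using \<open>open S\<close>
      by (intro continuous_open_preimage[OF holomorphic_on_imp_continuous_on[OF hol(2)]]) auto
    moreover have "(\<lambda>w. N w / D w) holomorphic_on U"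
      unfolding U_def by (intro holomorphic_on_divide holomorphic_on_subset[OF hol(1)] holomorphic_on_subset[OF hol(2)]) auto
    then have "(\<lambda>w. if D w = 0 then deriv N w / deriv D w else N w / D w) holomorphic_on U"
      by (rule holomorphic_transform) (auto simp: U_def)
    ultimately show ?thesis
      using \<open>z \<in> S\<close> False holomorphic_on_imp_differentiable_at by (auto simp: U_def)
  qed
qed

lemma annulus_representative:
  fixes p x :: complex
  assumes "0 < norm p" "norm p < 1" "x \<noteq> 0"
  obtains k :: int and w where "x = p powi k * w" "norm p \<le> norm w" "norm w \<le> 1"
proof -
  define L where "L = ln (norm p)"
  define k where "k = \<lfloor>ln (norm x) / L\<rfloor>"
  have L: "L < 0"
    using assms by (simp add: L_def)
  have k1: "of_int k \<le> ln (norm x) / L" and k2: "ln (norm x) / L < of_int k + 1"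
    unfolding k_def by linarith+
  have "of_int k * L \<ge> ln (norm x)"
    using k1 L by (simp add: pos_divide_le_eq neg_le_divide_eq mult.commute)
  moreover have "(of_int k + 1) * L < ln (norm x)"
    using k2 L by (simp add: neg_divide_less_eq mult.commute)
  moreover have "norm p powi k = exp (of_int k * L)"
    using exp_power_int[of L k] assms unfolding L_def by simp
  moreover have "norm p * norm p powi k = exp ((of_int k + 1) * L)"
    using exp_power_int[of L k] assms unfolding L_def by (simp add: distrib_right exp_add)
  ultimately have "norm p * norm p powi k < norm x \<and> norm x \<le> norm p powi k"
    using assms by (metis exp_le_cancel_iff exp_less_cancel_iff exp_ln zero_less_norm_iff)
  moreover have "norm p powi k > 0"
    using assms by simp
  moreover have "x = p powi k * (x / p powi k)"
    using assms by simp
  moreover have "norm (x / p powi k) = norm x / norm p powi k"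
    by (simp add: norm_divide norm_power_int)
  ultimately show ?thesis
    using that[of k "x / p powi k"] by (auto simp: field_simps)
qed

lemma periodic_power_int:
  fixes G :: "complex \<Rightarrow> 'a"
  assumes "p \<noteq> 0" "z \<noteq> 0" and periodic: "\<And>z. z \<noteq> 0 \<Longrightarrow> G (p * z) = G z"
  shows "G (p powi k * z) = G z"
proof -
  define P where "P w \<longleftrightarrow> w \<noteq> 0 \<and> G w = G z" for w
  have "P (w / p)" if "P w" for w
    using that assms(1) periodic[of "w / p"] by (simp add: P_def)
  moreover have "P (p * w)" if "P w" for w
    using that assms(1) periodic[of w] by (simp add: P_def)
  ultimately have "P (p powi k * z)"
    using power_int_mult_induct[OF assms(1), of P z] assms(2) by (simp add: P_def)
  then show ?thesis
    by (simp add: P_def)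
qed

lemma bounded_periodic:
  fixes G :: "complex \<Rightarrow> complex"
  assumes "continuous_on (-{0}) G" "0 < norm p" "norm p < 1"
    and periodic: "\<And>z. z \<noteq> 0 \<Longrightarrow> G (p * z) = G z"
  shows "bounded (G ` (-{0}))"
proof -
  define K where "K = cball (0::complex) 1 \<inter> - ball 0 (norm p)"
  have "compact K"
    unfolding K_def by (intro compact_Int_closed) auto
  moreover have "K \<subseteq> -{0}"
    using assms by (auto simp: K_def)
  then have "continuous_on K G"
    by (rule continuous_on_subset[OF assms(1)])
  ultimately have "compact (G ` K)"
    by (intro compact_continuous_image)
  then obtain B where B: "\<And>z. z \<in> K \<Longrightarrow> norm (G z) \<le> B"
    by (meson compact_imp_bounded bounded_iff imageI)
  have "norm (G z) \<le> B" if z: "z \<noteq> 0" for z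
  proof -
    obtain k w where w: "z = p powi k * w" "norm p \<le> norm w" "norm w \<le> 1"
      using annulus_representative[OF assms(2,3) z] .
    then have "w \<noteq> 0"
      using assms(2) by auto
    then have "G z = G w"
      using periodic_power_int[of p w G k] periodic assms(2) w(1) by simp
    moreover have "w \<in> K"
      using w by (simp add: K_def)
    ultimately show ?thesis
      using B by simp
  qed
  then show ?thesis
    unfolding bounded_iff by blast
qed

lemma quasi_periodic_holomorphic_constant:
  fixes G :: "complex \<Rightarrow> complex"
  assumes hol: "G holomorphic_on -{0}" and "0 < norm p" "norm p < 1"
    and periodic: "\<And>z. z \<noteq> 0 \<Longrightarrow> G (p * z) = G z"
  obtains c where "\<And>z. z \<noteq> 0 \<Longrightarrow> G z = c"
proof -
  have "bounded (G ` (-{0}))"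
    using bounded_periodic[OF holomorphic_on_imp_continuous_on[OF hol]] assms by blast
  then have "bounded (range (G \<circ> exp))"
    by (rule bounded_subset) auto
  moreover have "(G \<circ> exp) holomorphic_on UNIV"
    by (rule holomorphic_on_compose_gen[OF holomorphic_on_exp hol]) auto
  ultimately have "(G \<circ> exp) constant_on UNIV"
    by (rule Liouville_theorem[rotated])
  then obtain c where c: "\<And>t. G (exp t) = c"
    by (auto simp: constant_on_def)
  show ?thesis
  proof (rule that)
    show "G z = c" if "z \<noteq> 0" for z
      using c[of "Ln z"] that by simp
  qed
qed

lemma quasi_periodic_quotient_vanishes:
  fixes N D :: "complex \<Rightarrow> complex"
  assumes p: "0 < norm p" "norm p < 1"
    and hol: "N holomorphic_on -{0}" "D holomorphic_on -{0}"
    and qp: "\<And>z. z \<noteq> 0 \<Longrightarrow> N (p * z) = N z / z\<^sup>2" "\<And>z. z \<noteq> 0 \<Longrightarrow> D (p * z) = D z / z\<^sup>2"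
    and simple: "\<And>z. z \<noteq> 0 \<Longrightarrow> D z = 0 \<Longrightarrow> N z = 0 \<and> deriv D z \<noteq> 0"
    and y: "y \<noteq> 0" "N y = 0" "D y \<noteq> 0" and "x \<noteq> 0"
  shows "N x = 0"
proof -
  \<comment> \<open>\<open>N/D\<close> with its removable singularities at the simple zeros of \<open>D\<close> filled in\<close>
  define G where "G w = (if D w = 0 then deriv N w / deriv D w else N w / D w)" for w
  have "G holomorphic_on -{0}"
    unfolding G_def[abs_def] using hol simple by (intro holomorphic_on_quotient_simple_zeros) auto
  moreover have "G (p * z) = G z" if "z \<noteq> 0" for z
  proof (cases "D z = 0")
    case True
    then have "deriv N (p * z) = deriv N z / (p * z\<^sup>2)" "deriv D (p * z) = deriv D z / (p * z\<^sup>2)"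
      using simple deriv_quasi_periodic_at_zero[OF hol(1) qp(1)] deriv_quasi_periodic_at_zero[OF hol(2) qp(2)] that p
      by auto
    then show ?thesis
      using True simple[OF that] qp[OF that] that p by (auto simp: G_def)
  qed (use qp that in \<open>simp add: G_def\<close>)
  ultimately obtain c where c: "\<And>z. z \<noteq> 0 \<Longrightarrow> G z = c"
    using quasi_periodic_holomorphic_constant p by blast
  have "c = 0"
    using c[OF y(1)] y by (simp add: G_def)
  then show ?thesis
    using c[OF \<open>x \<noteq> 0\<close>] simple[OF \<open>x \<noteq> 0\<close>] by (cases "D x = 0") (auto simp: G_def)
qed

section \<open>The addition formula\<close>

definition theta_pm :: "complex \<Rightarrow> complex \<Rightarrow> complex \<Rightarrow> complex" where
  "theta_pm x u p = theta (x * u) p * theta (x / u) p"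

lemma theta_pm_inverse_right: "theta_pm x (inverse u) p = theta_pm x u p"
  by (simp add: theta_pm_def divide_inverse mult.commute)

lemma theta_pm_inverse_left:
  assumes "norm p < 1" "x \<noteq> 0" "u \<noteq> 0"
  shows "theta_pm (inverse x) u p = theta_pm x u p / x\<^sup>2"
proof -
  have "theta (inverse x * u) p = - theta (x / u) p / (x / u)"
    using theta_inverse[OF assms(1), of "x / u"] assms by (simp add: field_simps)
  moreover have "theta (inverse x / u) p = - theta (x * u) p / (x * u)"
    using theta_inverse[OF assms(1), of "x * u"] assms by (simp add: field_simps)
  moreover have "(- A / (x / u)) * (- B / (x * u)) = B * A / x\<^sup>2" for A B
    using assms by (simp add: field_simps power2_eq_square)
  ultimately show ?thesis
    by (simp add: theta_pm_def)
qed

lemma theta_pm_swap: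
  assumes "norm p < 1" "x \<noteq> 0" "u \<noteq> 0"
  shows "theta_pm u x p = - (u / x) * theta_pm x u p"
proof -
  have "theta (u / x) p = - theta (x / u) p / (x / u)"
    using theta_inverse[OF assms(1), of "x / u"] assms by (simp add: field_simps)
  moreover have "B * (- A / (x / u)) = - (u / x) * (B * A)" for A B
    using assms by (simp add: field_simps)
  ultimately show ?thesis
    by (simp add: theta_pm_def mult.commute)
qed

lemma theta_pm_times_nome:
  assumes "norm p < 1" "p \<noteq> 0" "x \<noteq> 0" "u \<noteq> 0"
  shows "theta_pm (p * x) u p = theta_pm x u p / x\<^sup>2"
proof -
  have "theta (p * x * u) p = - theta (x * u) p / (x * u)"
    using theta_times_nome[OF assms(1,2), of "x * u"] assms by (simp add: mult.assoc)
  moreover have "theta (p * x / u) p = - theta (x / u) p / (x / u)"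
    using theta_times_nome[OF assms(1,2), of "x / u"] assms by (simp add: times_divide_eq_right)
  moreover have "(- B / (x * u)) * (- A / (x / u)) = B * A / x\<^sup>2" for A B
    using assms by (simp add: field_simps power2_eq_square)
  ultimately show ?thesis
    by (simp add: theta_pm_def mult.assoc)
qed

lemma theta_pm_self:
  assumes "norm p < 1" "u \<noteq> 0"
  shows "theta_pm u u p = 0"
  using assms by (simp add: theta_pm_def)

lemma theta_pm_inverse_self:
  assumes "norm p < 1" "u \<noteq> 0"
  shows "theta_pm (inverse u) u p = 0"
  using assms by (simp add: theta_pm_def)

lemma theta_pm_eq_0_imp_power_int:
  assumes "norm p < 1" "p \<noteq> 0" "x \<noteq> 0" "u \<noteq> 0" "theta_pm x u p = 0"
  shows "\<exists>k::int. x = p powi k * u \<or> x = p powi k * inverse u"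
proof -
  have "theta (x * u) p = 0 \<or> theta (x / u) p = 0"
    using assms(5) by (simp add: theta_pm_def)
  then obtain k where "x * u = p powi k \<or> x / u = p powi k"
    using theta_eq_0_imp_power_int[OF assms(1,2), of "x * u"]
      theta_eq_0_imp_power_int[OF assms(1,2), of "x / u"] assms(3,4) by auto
  then have "x = p powi k * inverse u \<or> x = p powi k * u"
    using assms by (auto simp: field_simps)
  then show ?thesis
    by blast
qed

lemma holomorphic_on_theta_pm:
  assumes "norm p < 1" "f holomorphic_on S" "g holomorphic_on S"
    and "\<And>z. z \<in> S \<Longrightarrow> f z \<noteq> 0" "\<And>z. z \<in> S \<Longrightarrow> g z \<noteq> 0"
  shows "(\<lambda>z. theta_pm (f z) (g z) p) holomorphic_on S"
  unfolding theta_pm_def using assms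
  by (intro holomorphic_intros holomorphic_on_theta) auto

lemma deriv_theta_pm_self_nonzero:
  assumes "norm p < 1" "u \<noteq> 0" "theta (u * u) p \<noteq> 0"
  shows "deriv (\<lambda>x. theta_pm x u p) u \<noteq> 0"
proof -
  let ?T = "\<lambda>w. theta w p"
  have dT: "(?T has_field_derivative deriv ?T w) (at w)" if "w \<noteq> 0" for w
    using holomorphic_on_theta[OF assms(1) holomorphic_on_id, of "-{0}"] that
    by (intro holomorphic_derivI) auto
  have "((\<lambda>x. theta (x * u) p) has_field_derivative deriv ?T (u * u) * u) (at u)"
    by (rule DERIV_chain2[OF dT DERIV_cmult_right[OF DERIV_ident], THEN DERIV_cong]) (use assms in simp_all)
  moreover have "((\<lambda>x. theta (x / u) p) has_field_derivative deriv ?T (u / u) * (1 / u)) (at u)"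
    by (rule DERIV_chain2[OF dT DERIV_cdivide[OF DERIV_ident]]) (use assms in simp)
  then have "((\<lambda>x. theta (x / u) p) has_field_derivative - (qpoch_inf p p)\<^sup>2 / u) (at u)"
    using assms DERIV_imp_deriv[OF theta_has_field_derivative_at_1[OF assms(1)]] by simp
  ultimately have "((\<lambda>x. theta_pm x u p) has_field_derivative
      deriv ?T (u * u) * u * theta (u / u) p + - (qpoch_inf p p)\<^sup>2 / u * theta (u * u) p) (at u)"
    unfolding theta_pm_def by (rule DERIV_mult)
  then have "deriv (\<lambda>x. theta_pm x u p) u = - (qpoch_inf p p)\<^sup>2 / u * theta (u * u) p"
    using assms by (simp add: DERIV_imp_deriv)
  then show ?thesis
    using assms qpoch_inf_nome_nonzero[OF assms(1)] by simp
qed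

lemma theta_pm_zero_is_simple:
  assumes p: "norm p < 1" "p \<noteq> 0" and u: "u \<noteq> 0" "theta (u * u) p \<noteq> 0"
    and z: "z \<noteq> 0" "theta_pm z u p = 0"
  shows "deriv (\<lambda>x. theta_pm x u p) z \<noteq> 0"
proof -
  define D where "D x = theta_pm x u p" for x
  have hol: "D holomorphic_on -{0}"
    unfolding D_def[abs_def] using u by (intro holomorphic_on_theta_pm[OF p(1)]) auto
  have qp: "D (p * z) = D z / z\<^sup>2" if "z \<noteq> 0" for z
    using that u theta_pm_times_nome[OF p] by (simp add: D_def)
  have "D u = 0"
    using theta_pm_self[OF p(1) u(1)] by (simp add: D_def)
  moreover have "D (inverse u) = 0"
    using theta_pm_inverse_self[OF p(1) u(1)] by (simp add: D_def)
  moreover have "deriv D u \<noteq> 0"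
    unfolding D_def[abs_def] by (rule deriv_theta_pm_self_nonzero[OF p(1) u])
  moreover have "deriv D (inverse u) \<noteq> 0"
  proof -
    have "D = (\<lambda>x. theta_pm x (inverse u) p)"
      by (simp add: D_def[abs_def] theta_pm_inverse_right)
    moreover have "theta (inverse u * inverse u) p \<noteq> 0"
      using theta_inverse[OF p(1), of "u * u"] u by (simp add: nonzero_inverse_mult_distrib)
    ultimately show ?thesis
      using deriv_theta_pm_self_nonzero[OF p(1)] u(1) by simp
  qed
  moreover obtain k :: int and z0 where z0: "z = p powi k * z0" "z0 = u \<or> z0 = inverse u"
    using theta_pm_eq_0_imp_power_int[OF p z(1) u(1) z(2)] by auto
  ultimately have "z0 \<noteq> 0" "D z0 = 0" "deriv D z0 \<noteq> 0"
    using u(1) by auto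
  then have "deriv D z \<noteq> 0"
    using quasi_periodic_zero_power_int[OF hol qp p(2) \<open>z0 \<noteq> 0\<close> \<open>D z0 = 0\<close>, of k] z0(1) by simp
  then show ?thesis
    by (simp add: D_def[abs_def])
qed

lemma theta_pm_addition_generic:
  assumes p: "norm p < 1" "p \<noteq> 0" and nz: "x \<noteq> 0" "y \<noteq> 0" "u \<noteq> 0" "v \<noteq> 0"
    and uu: "theta (u * u) p \<noteq> 0" and yu: "theta_pm y u p \<noteq> 0"
  shows "theta_pm x y p * theta_pm u v p - theta_pm x v p * theta_pm u y p
    = u / y * theta_pm y v p * theta_pm x u p"
proof -
  define N where "N x = theta_pm x y p * theta_pm u v p - theta_pm x v p * theta_pm u y p
    - u / y * theta_pm y v p * theta_pm x u p" for x
  define D where "D x = theta_pm x u p" for x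
  have hol: "N holomorphic_on -{0}" "D holomorphic_on -{0}"
    unfolding N_def[abs_def] D_def[abs_def] using nz
    by (auto intro!: holomorphic_intros holomorphic_on_theta_pm[OF p(1)])
  have qp: "N (p * z) = N z / z\<^sup>2" "D (p * z) = D z / z\<^sup>2" if "z \<noteq> 0" for z
    using that nz theta_pm_times_nome[OF p] by (simp_all add: N_def D_def diff_divide_distrib)
  have "N u = 0"
    by (simp add: N_def theta_pm_self[OF p(1) nz(3)])
  moreover have "N (inverse u) = 0"
    using theta_pm_inverse_self[OF p(1) nz(3)] nz by (simp add: N_def theta_pm_inverse_left[OF p(1) nz(3)])
  ultimately have N_base: "z0 \<noteq> 0 \<and> N z0 = 0" if "z0 = u \<or> z0 = inverse u" for z0
    using that nz(3) by auto
  have simple: "N z = 0 \<and> deriv D z \<noteq> 0" if z: "z \<noteq> 0" "D z = 0" for z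
  proof -
    obtain k :: int and z0 where z0: "z = p powi k * z0" "z0 = u \<or> z0 = inverse u"
      using theta_pm_eq_0_imp_power_int[OF p z(1) nz(3)] z(2) by (auto simp: D_def)
    then have "N z = 0"
      using N_base quasi_periodic_zero_power_int[OF hol(1) qp(1) p(2), of z0 k] by blast
    moreover have "deriv D z \<noteq> 0"
      using theta_pm_zero_is_simple[OF p nz(3) uu z(1)] z(2) by (simp add: D_def[abs_def])
    ultimately show ?thesis
      by blast
  qed
  have "N y = 0"
    using theta_pm_swap[OF p(1) nz(2,3)] theta_pm_self[OF p(1) nz(2)] nz by (simp add: N_def)
  moreover have "D y \<noteq> 0" "0 < norm p"
    using yu p(2) by (simp_all add: D_def)
  ultimately have "N x = 0"
    using quasi_periodic_quotient_vanishes[OF _ p(1) hol qp simple nz(2) _ _ nz(1)] by blast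
  then show ?thesis
    by (simp add: N_def)
qed

lemma isCont_eq_off_countable:
  fixes f :: "'a::euclidean_space \<Rightarrow> 'b::t1_space"
  assumes "isCont f z" "countable C" "\<And>w. w \<notin> C \<Longrightarrow> f w = a"
  shows "f z = a"
proof (rule ccontr)
  assume "f z \<noteq> a"
  then obtain e where "e > 0" and e: "\<And>w. dist z w < e \<Longrightarrow> f w \<noteq> a"
    using continuous_at_avoid[OF assms(1)] by blast
  have "\<not> ball z e \<subseteq> C"
    using uncountable_ball[OF \<open>e > 0\<close>] assms(2) countable_subset by blast
  then obtain w where "dist z w < e" "w \<notin> C"
    by (meson mem_ball subsetI)
  then show False
    using e assms(3) by blast
qed

lemma countable_theta_pm_degenerate:
  assumes "norm p < 1" "p \<noteq> 0" "y \<noteq> 0"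
  shows "countable {w. w \<noteq> 0 \<and> (theta (w * w) p = 0 \<or> theta_pm y w p = 0)}"
proof (rule countable_subset)
  show "{w. w \<noteq> 0 \<and> (theta (w * w) p = 0 \<or> theta_pm y w p = 0)}
      \<subseteq> (\<Union>k::int. {csqrt (p powi k), - csqrt (p powi k), p powi k / y, y / p powi k})"
  proof
    fix w :: complex
    assume "w \<in> {w. w \<noteq> 0 \<and> (theta (w * w) p = 0 \<or> theta_pm y w p = 0)}"
    then have w: "w \<noteq> 0" and "theta (w * w) p = 0 \<or> theta_pm y w p = 0"
      by auto
    then show "w \<in> (\<Union>k::int. {csqrt (p powi k), - csqrt (p powi k), p powi k / y, y / p powi k})"
    proof (elim disjE)
      assume "theta (w * w) p = 0"
      then obtain k where "w * w = p powi k"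
        using theta_eq_0_imp_power_int[OF assms(1,2)] w by fastforce
      then have "w\<^sup>2 = (csqrt (p powi k))\<^sup>2"
        by (metis power2_csqrt power2_eq_square)
      then show ?thesis
        using power2_eq_iff by blast
    next
      assume "theta_pm y w p = 0"
      then obtain k where "y = p powi k * w \<or> y = p powi k * inverse w"
        using theta_pm_eq_0_imp_power_int[OF assms w] by blast
      then have "w = y / p powi k \<or> w = p powi k / y"
        using assms w by (auto simp: field_simps)
      then show ?thesis
        by blast
    qed
  qed
qed simp

lemma theta_pm_addition:
  assumes p: "norm p < 1" and nz: "x \<noteq> 0" "y \<noteq> 0" "u \<noteq> 0" "v \<noteq> 0"
  shows "theta_pm x y p * theta_pm u v p - theta_pm x v p * theta_pm u y p
    = u / y * theta_pm y v p * theta_pm x u p"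
proof (cases "p = 0")
  case True
  then show ?thesis
    using nz by (simp add: theta_pm_def theta_nome_0 field_simps)
next
  case False
  define C where "C = insert 0 {w. w \<noteq> 0 \<and> (theta (w * w) p = 0 \<or> theta_pm y w p = 0)}"
  define \<Phi> where "\<Phi> w = theta_pm x y p * theta_pm w v p - theta_pm x v p * theta_pm w y p
    - w / y * theta_pm y v p * theta_pm x w p" for w
  have "\<Phi> holomorphic_on -{0}"
    unfolding \<Phi>_def[abs_def] using nz
    by (auto intro!: holomorphic_intros holomorphic_on_theta_pm[OF p])
  moreover have "open (-{0::complex})"
    by auto
  ultimately have "isCont \<Phi> u"
    using nz(3) holomorphic_on_imp_continuous_on continuous_on_eq_continuous_at by blast
  moreover have "countable C"
    using countable_theta_pm_degenerate[OF p False nz(2)] by (simp add: C_def)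
  moreover have "\<Phi> w = 0" if "w \<notin> C" for w
    using that theta_pm_addition_generic[OF p False nz(1,2) _ nz(4)] by (auto simp: C_def \<Phi>_def)
  ultimately have "\<Phi> u = 0"
    by (rule isCont_eq_off_countable)
  then show ?thesis
    by (simp add: \<Phi>_def)
qed

lemma theta_addition_formula:
  assumes "norm p < 1" "a \<noteq> 0" "b \<noteq> 0" "c \<noteq> 0" "x \<noteq> 0"
  shows "theta (a * x) p * theta (b * x) p * theta (c * x) p * theta (a * x / (b * c)) p
       - theta x p * theta (a * x / b) p * theta (a * x / c) p * theta (b * c * x) p
       = x * theta (a * x * x) p * theta b p * theta c p * theta (a / (b * c)) p"
proof -
  define r where "r = csqrt (b * c)"
  have r: "r * r = b * c" "r \<noteq> 0"
    using assms unfolding r_def by (metis power2_csqrt power2_eq_square, simp)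
  define X U V where "X = a * x / r" and "U = x * r" and "V = b / r"
  have "X \<noteq> 0" "U \<noteq> 0" "V \<noteq> 0"
    using assms r unfolding X_def U_def V_def by auto
  then have "theta_pm X r p * theta_pm U V p - theta_pm X V p * theta_pm U r p
      = U / r * theta_pm r V p * theta_pm X U p"
    using theta_pm_addition[OF assms(1)] r(2) by blast
  moreover have "X * r = a * x" "X / r = a * x / (b * c)" "U * V = b * x" "U / V = c * x"
    "X * V = a * x / c" "X / V = a * x / b" "U * r = b * c * x" "U / r = x"
    "r * V = b" "r / V = c" "X * U = a * x * x" "X / U = a / (b * c)"
    using assms r unfolding X_def U_def V_def by (simp_all add: field_simps flip: r(1))
  ultimately show ?thesis
    unfolding theta_pm_def by (simp add: algebra_simps)
qed

section \<open>Elliptic shifted factorials\<close>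

lemma epoch_Suc: "epoch z q p (Suc k) = epoch z q p k * theta (z * q ^ k) p"
  by (simp add: epoch_def)

lemma epoch_Suc_shift: "epoch z q p (Suc k) = theta z p * epoch (z * q) q p k"
  unfolding epoch_def by (subst prod.lessThan_Suc_shift) (simp add: mult_ac)

lemma epoch_nonzero_le:
  assumes "k \<le> n" "epoch z q p n \<noteq> 0"
  shows "epoch z q p k \<noteq> 0"
  using assms by (induction n rule: dec_induct) (auto simp: epoch_Suc)

lemma epochs_Nil: "epochs [] q p n = 1"
  by (simp add: epochs_def)

lemma epochs_Cons: "epochs (z # zs) q p n = epoch z q p n * epochs zs q p n"
  by (simp add: epochs_def)

lemma epochs_append: "epochs (zs @ ws) q p n = epochs zs q p n * epochs ws q p n"
  by (simp add: epochs_def)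

lemma epochs_0 [simp]: "epochs zs q p 0 = 1"
  by (induction zs) (simp_all add: epochs_def epoch_def)

lemma epochs_Suc:
  "epochs zs q p (Suc k) = epochs zs q p k * prod_list (map (\<lambda>z. theta (z * q ^ k) p) zs)"
  by (induction zs) (simp_all add: epochs_def epoch_Suc)

lemma epochs_Suc_shift:
  "epochs zs q p (Suc k) = prod_list (map (\<lambda>z. theta z p) zs) * epochs (map (\<lambda>z. z * q) zs) q p k"
  by (induction zs) (simp_all add: epochs_def epoch_Suc_shift)

lemma epochs_nonzero_le:
  assumes "k \<le> n" "epochs zs q p n \<noteq> 0"
  shows "epochs zs q p k \<noteq> 0"
  using assms(2) by (induction zs) (auto simp: epochs_Nil epochs_Cons dest: epoch_nonzero_le[OF assms(1)])

lemma epoch_reverse: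
  assumes "norm p < 1" "q \<noteq> 0" "z \<noteq> 0" "w * z * q ^ n = q" "k \<le> n"
  shows "epoch z q p n = epoch z q p (n - k) * epoch w q p k * (\<Prod>i<k. - z * q ^ (n - Suc i))"
  using assms(5)
proof (induction k)
  case (Suc k)
  then have "k < n"
    by simp
  have "n = (n - Suc k) + k + 1"
    using \<open>k < n\<close> by simp
  then have "q ^ n = q ^ (n - Suc k) * q ^ k * q"
    by (metis power_add power_one_right)
  then have "(z * q ^ (n - Suc k)) * (w * q ^ k) * q = q"
    using assms(4) by (simp add: mult_ac)
  then have "inverse (z * q ^ (n - Suc k)) = w * q ^ k"
    using assms(2) by (intro inverse_unique) simp
  then have "theta (w * q ^ k) p = - theta (z * q ^ (n - Suc k)) p / (z * q ^ (n - Suc k))"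
    using theta_inverse[OF assms(1), of "z * q ^ (n - Suc k)"] assms(2,3) by simp
  then have "theta (z * q ^ (n - Suc k)) p = - (z * q ^ (n - Suc k)) * theta (w * q ^ k) p"
    using assms(2,3) by (simp add: field_simps)
  moreover have "epoch z q p (n - k) = epoch z q p (n - Suc k) * theta (z * q ^ (n - Suc k)) p"
    using \<open>k < n\<close> epoch_Suc[of z q p "n - Suc k"] by (simp add: Suc_diff_Suc)
  ultimately show ?case
    using Suc by (simp add: epoch_Suc mult_ac)
qed (simp add: epoch_def)

lemma epochs_reverse:
  assumes "norm p < 1" "q \<noteq> 0" "k \<le> n"
    and "list_all2 (\<lambda>z w. z \<noteq> 0 \<and> w * z * q ^ n = q) zs ws"
  shows "epochs zs q p n = epochs zs q p (n - k) * epochs ws q p k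
    * (\<Prod>i<k. prod_list (map (\<lambda>z. - z * q ^ (n - Suc i)) zs))"
  using assms(4)
proof (induction rule: list_all2_induct)
  case (Cons z zs w ws)
  have prod_Cons: "(\<Prod>i<k. prod_list (map (\<lambda>z. - z * q ^ (n - Suc i)) (z # zs)))
      = (\<Prod>i<k. - z * q ^ (n - Suc i)) * (\<Prod>i<k. prod_list (map (\<lambda>z. - z * q ^ (n - Suc i)) zs))"
    by (simp only: list.map prod_list.Cons prod.distrib)
  have "epoch z q p n = epoch z q p (n - k) * epoch w q p k * (\<Prod>i<k. - z * q ^ (n - Suc i))"
    using Cons(1) by (intro epoch_reverse[OF assms(1,2) _ _ assms(3)]) auto
  then show ?case
    unfolding epochs_Cons prod_Cons Cons(3) by (simp add: mult_ac)
qed (simp add: epochs_Nil)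

lemma sum_backward_difference_convolution:
  fixes f g :: "nat \<Rightarrow> 'a::comm_ring"
  shows "(\<Sum>k=0..n. (f k - (if k = 0 then 0 else f (k - 1))) * g (n - k))
       = (\<Sum>k=0..n. (g k - (if k = 0 then 0 else g (k - 1))) * f (n - k))"
proof -
  \<comment> \<open>both sides are \<open>\<Sum>\<^sub>i\<^sub>+\<^sub>j\<^sub>=\<^sub>n f i g j - \<Sum>\<^sub>i\<^sub>+\<^sub>j\<^sub>=\<^sub>n\<^sub>-\<^sub>1 f i g j\<close>\<close>
  have conv_commute: "(\<Sum>k=0..m. f k * g (m - k)) = (\<Sum>k=0..m. g k * f (m - k))" for m
    by (subst sum.atLeastAtMost_rev) (simp add: mult.commute)
  have split: "(\<Sum>k=0..n. (f k - (if k = 0 then 0 else f (k - 1))) * g (n - k))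
     = (\<Sum>k=0..n. f k * g (n - k)) - (if n = 0 then 0 else (\<Sum>k=0..n-1. f k * g (n - 1 - k)))"
    for f g :: "nat \<Rightarrow> 'a"
  proof (cases n)
    case (Suc m)
    have "(\<Sum>k=0..Suc m. (if k = 0 then 0 else f (k - 1)) * g (Suc m - k))
        = (\<Sum>k=0..m. f k * g (m - k))"
      by (subst sum.atLeast0_atMost_Suc_shift) simp
    then show ?thesis
      using Suc by (simp add: left_diff_distrib sum_subtractf)
  qed simp
  show ?thesis
    unfolding split[of f g] split[of g f] using conv_commute[of n] conv_commute[of "n - 1"]
    by (cases "n = 0") (simp_all add: diff_diff_left)
qed

section \<open>Very-well-poised sums\<close>

text \<open>
  By \<open>vwp_term_telescopes\<close>, \<open>vwp_sum a b c q p m\<close> is the sum of the terms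
  with \<open>k \<le> m\<close>.
\<close>

definition vwp_term :: "complex \<Rightarrow> complex \<Rightarrow> complex \<Rightarrow> complex \<Rightarrow> complex \<Rightarrow> nat \<Rightarrow> complex" where
  "vwp_term a b c q p k = theta (a * q ^ (2 * k)) p / theta a p
     * epochs [a, b, c, a / (b * c)] q p k / epochs [q, a * q / b, a * q / c, b * c * q] q p k * q ^ k"

definition vwp_sum :: "complex \<Rightarrow> complex \<Rightarrow> complex \<Rightarrow> complex \<Rightarrow> complex \<Rightarrow> nat \<Rightarrow> complex" where
  "vwp_sum a b c q p m = epochs [a * q, b * q, c * q, a * q / (b * c)] q p m
     / epochs [q, a * q / b, a * q / c, b * c * q] q p m"

definition reversed_ratio :: "complex \<Rightarrow> complex \<Rightarrow> complex \<Rightarrow> complex \<Rightarrow> complex \<Rightarrow> nat \<Rightarrow> nat \<Rightarrow> complex" where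
  "reversed_ratio a b c q p n k =
     epochs [inverse (q ^ n), b * inverse (q ^ n) / a, c * inverse (q ^ n) / a, inverse (q ^ n) / (b * c)] q p k
     / epochs [inverse (q ^ n) / a, inverse (q ^ n) / b, inverse (q ^ n) / c, b * c * inverse (q ^ n) / a] q p k"

lemma vwp_term_telescopes:
  assumes "norm p < 1" "a \<noteq> 0" "b \<noteq> 0" "c \<noteq> 0" "q \<noteq> 0" "theta a p \<noteq> 0"
    and "epochs [q, a * q / b, a * q / c, b * c * q] q p k \<noteq> 0"
  shows "vwp_term a b c q p k = vwp_sum a b c q p k - (if k = 0 then 0 else vwp_sum a b c q p (k - 1))"
proof (cases k)
  case 0
  then show ?thesis
    using assms by (simp add: vwp_term_def vwp_sum_def)
next
  case (Suc j)
  define x where "x = q ^ Suc j"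
  define Dj where "Dj = epochs [q, a * q / b, a * q / c, b * c * q] q p j"
  define Nj where "Nj = epochs [a * q, b * q, c * q, a * q / (b * c)] q p j"
  define dx where "dx = theta x p * theta (a * x / b) p * theta (a * x / c) p * theta (b * c * x) p"
  define nx where "nx = theta (a * x) p * theta (b * x) p * theta (c * x) p * theta (a * x / (b * c)) p"
  define R where "R = theta b p * theta c p * theta (a / (b * c)) p"
  have qx: "q * q ^ j = x"
    by (simp add: x_def)
  have D: "epochs [q, a * q / b, a * q / c, b * c * q] q p k = Dj * dx"
    unfolding Suc epochs_Suc Dj_def dx_def by (simp add: mult_ac flip: qx)
  have N: "epochs [a * q, b * q, c * q, a * q / (b * c)] q p k = Nj * nx"
    unfolding Suc epochs_Suc Nj_def nx_def by (simp add: mult_ac flip: qx)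
  have E: "epochs [a, b, c, a / (b * c)] q p k = theta a p * R * Nj"
    unfolding Suc epochs_Suc_shift Nj_def R_def by (simp add: mult_ac)
  have "nx - dx = x * theta (a * x * x) p * R"
    unfolding nx_def dx_def R_def using theta_addition_formula[OF assms(1-4), of x] assms(5)
    by (simp add: x_def mult_ac)
  have "Dj \<noteq> 0" "dx \<noteq> 0"
    using assms(7) D by auto
  have "q ^ (2 * k) = x * x" "q ^ k = x"
    by (simp_all add: Suc x_def mult_2 power_add)
  then have "vwp_term a b c q p k = theta (a * x * x) p / theta a p * (theta a p * R * Nj) / (Dj * dx) * x"
    unfolding vwp_term_def E D by (simp add: mult.assoc)
  also have "\<dots> = Nj * (nx - dx) / (Dj * dx)"
    using \<open>nx - dx = x * theta (a * x * x) p * R\<close> assms(6) by simp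
  also have "\<dots> = Nj * nx / (Dj * dx) - Nj / Dj"
    using \<open>Dj \<noteq> 0\<close> \<open>dx \<noteq> 0\<close> by (simp add: field_simps)
  also have "\<dots> = vwp_sum a b c q p k - (if k = 0 then 0 else vwp_sum a b c q p (k - 1))"
    unfolding vwp_sum_def N D using Suc by (simp add: Nj_def Dj_def)
  finally show ?thesis .
qed

lemma vwp_sum_reverse:
  assumes "norm p < 1" "a \<noteq> 0" "b \<noteq> 0" "c \<noteq> 0" "q \<noteq> 0" "k \<le> n"
    and "epochs [q, a * q / b, a * q / c, b * c * q] q p n \<noteq> 0"
    and "epochs [inverse (q ^ n) / a, inverse (q ^ n) / b, inverse (q ^ n) / c,
                 b * c * inverse (q ^ n) / a] q p k \<noteq> 0"
  shows "vwp_sum a b c q p n * reversed_ratio a b c q p n k = vwp_sum a b c q p (n - k)"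
proof -
  define F where "F zs = (\<Prod>i<k. prod_list (map (\<lambda>z. - z * q ^ (n - Suc i)) zs))" for zs
  define num den den' num' where
    "num = [a * q, b * q, c * q, a * q / (b * c)]" and "den = [q, a * q / b, a * q / c, b * c * q]"
    and "den' = [inverse (q ^ n) / a, inverse (q ^ n) / b, inverse (q ^ n) / c, b * c * inverse (q ^ n) / a]"
    and "num' = [inverse (q ^ n), b * inverse (q ^ n) / a, c * inverse (q ^ n) / a, inverse (q ^ n) / (b * c)]"
  have den_rev: "epochs den q p n = epochs den q p (n - k) * epochs num' q p k * F den"
    unfolding F_def den_def num'_def using assms
    by (intro epochs_reverse) (simp_all add: field_simps)
  have num_rev: "epochs num q p n = epochs num q p (n - k) * epochs den' q p k * F num"
    unfolding F_def num_def den'_def using assms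
    by (intro epochs_reverse) (simp_all add: field_simps)
  have "F num = F den"
    unfolding F_def num_def den_def using assms by (intro prod.cong) (simp_all add: field_simps)
  moreover have "epochs den q p (n - k) \<noteq> 0" "epochs num' q p k \<noteq> 0" "F den \<noteq> 0"
    using assms(7) den_rev by (simp_all add: den_def)
  moreover have "epochs den' q p k \<noteq> 0"
    using assms(8) by (simp add: den'_def)
  moreover have "N * G' * f / (D * G * f) * (G / G') = N / D"
    if "D \<noteq> 0" "G \<noteq> 0" "f \<noteq> 0" "G' \<noteq> 0" for N D G G' f :: complex
    using that by (simp add: field_simps)
  ultimately show ?thesis
    unfolding vwp_sum_def reversed_ratio_def num_def[symmetric] den_def[symmetric]
      num'_def[symmetric] den'_def[symmetric] num_rev den_rev
    by simp
qed

lemma vwp_sum_quotient: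
  assumes "epoch q q p n \<noteq> 0"
  shows "epochs [a * q, b * q, c * q, a * q / (b * c), A * q / B, A * q / C, B * C * q] q p n
       / epochs [A * q, B * q, C * q, A * q / (B * C), a * q / b, a * q / c, b * c * q] q p n
       = vwp_sum a b c q p n / vwp_sum A B C q p n"
  using assms by (simp add: vwp_sum_def epochs_Cons epochs_Nil divide_divide_times_eq)

lemma vwp_term_mult_reversed_ratio:
  assumes "norm p < 1" "q \<noteq> 0" "a \<noteq> 0" "b \<noteq> 0" "c \<noteq> 0" "A \<noteq> 0" "B \<noteq> 0" "C \<noteq> 0"
    and "theta a p \<noteq> 0" "k \<le> n"
    and "epochs [q, a * q / b, a * q / c, b * c * q] q p n \<noteq> 0"
    and "epochs [q, A * q / B, A * q / C, B * C * q] q p n \<noteq> 0"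
    and "epochs [inverse (q ^ n) / A, inverse (q ^ n) / B, inverse (q ^ n) / C,
                 B * C * inverse (q ^ n) / A] q p n \<noteq> 0"
  shows "vwp_term a b c q p k * (vwp_sum A B C q p n * reversed_ratio A B C q p n k)
    = (vwp_sum a b c q p k - (if k = 0 then 0 else vwp_sum a b c q p (k - 1))) * vwp_sum A B C q p (n - k)"
  using assms epochs_nonzero_le[OF \<open>k \<le> n\<close>]
  by (simp add: vwp_term_telescopes vwp_sum_reverse)

theorem mainTheorem1:
  fixes p q a b c A B C :: complex and n :: nat
  assumes hp: "norm p < 1"
    and hq: "q \<noteq> 0"
    and hnz: "a \<noteq> 0" "b \<noteq> 0" "c \<noteq> 0" "A \<noteq> 0" "B \<noteq> 0" "C \<noteq> 0"
    and hta: "theta a p \<noteq> 0" and htA: "theta A p \<noteq> 0"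
    and hd1: "epochs [q, a*q/b, a*q/c, b*c*q] q p n \<noteq> 0"
    and hd2: "epochs [inverse (q^n) / A, inverse (q^n) / B, inverse (q^n) / C,
                      B*C*inverse (q^n) / A] q p n \<noteq> 0"
    and hd3: "epochs [q, A*q/B, A*q/C, B*C*q] q p n \<noteq> 0"
    and hd4: "epochs [inverse (q^n) / a, inverse (q^n) / b, inverse (q^n) / c,
                      b*c*inverse (q^n) / a] q p n \<noteq> 0"
    and hd5: "epochs [A*q, B*q, C*q, A*q/(B*C), a*q/b, a*q/c, b*c*q] q p n \<noteq> 0"
  shows "(\<Sum>k=0..n. theta (a * q^(2*k)) p / theta a p
            * epochs [a, b, c, a/(b*c)] q p k / epochs [q, a*q/b, a*q/c, b*c*q] q p k
            * epochs [inverse (q^n), B*inverse (q^n)/A, C*inverse (q^n)/A, inverse (q^n)/(B*C)] q p k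
            / epochs [inverse (q^n)/A, inverse (q^n)/B, inverse (q^n)/C, B*C*inverse (q^n)/A] q p k
            * q^k)
       = epochs [a*q, b*q, c*q, a*q/(b*c), A*q/B, A*q/C, B*C*q] q p n
         / epochs [A*q, B*q, C*q, A*q/(B*C), a*q/b, a*q/c, b*c*q] q p n
         * (\<Sum>k=0..n. theta (A * q^(2*k)) p / theta A p
            * epochs [A, B, C, A/(B*C)] q p k / epochs [q, A*q/B, A*q/C, B*C*q] q p k
            * epochs [inverse (q^n), b*inverse (q^n)/a, c*inverse (q^n)/a, inverse (q^n)/(b*c)] q p k
            / epochs [inverse (q^n)/a, inverse (q^n)/b, inverse (q^n)/c, b*c*inverse (q^n)/a] q p k
            * q^k)"
proof -
  let ?Sa = "vwp_sum a b c q p" and ?SA = "vwp_sum A B C q p"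
  let ?\<Delta>Sa = "\<lambda>k. ?Sa k - (if k = 0 then 0 else ?Sa (k - 1))"
  let ?\<Delta>SA = "\<lambda>k. ?SA k - (if k = 0 then 0 else ?SA (k - 1))"
  have SA: "?SA n \<noteq> 0"
    using hd3 hd5 epochs_append[of "[A * q, B * q, C * q, A * q / (B * C)]" "[a * q / b, a * q / c, b * c * q]"]
    by (simp add: vwp_sum_def)
  have q: "epoch q q p n \<noteq> 0"
    using hd1 by (simp add: epochs_Cons)
  show ?thesis (is "sum ?l {0..n} = ?P * sum ?r {0..n}")
  proof -
    have l: "?l k = vwp_term a b c q p k * (?SA n * reversed_ratio A B C q p n k) / ?SA n" for k
      using SA by (simp add: vwp_term_def reversed_ratio_def divide_inverse mult_ac)
    have r: "?P * ?r k = vwp_term A B C q p k * (?Sa n * reversed_ratio a b c q p n k) / ?SA n" for k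
      unfolding vwp_sum_quotient[OF q]
      by (simp add: vwp_term_def reversed_ratio_def divide_inverse mult_ac)
    have "sum ?l {0..n} = (\<Sum>k=0..n. ?\<Delta>Sa k * ?SA (n - k)) / ?SA n"
      unfolding l sum_divide_distrib
      by (intro sum.cong refl) (simp add: vwp_term_mult_reversed_ratio[OF hp hq hnz hta _ hd1 hd3 hd2])
    also have "\<dots> = (\<Sum>k=0..n. ?\<Delta>SA k * ?Sa (n - k)) / ?SA n"
      by (simp only: sum_backward_difference_convolution)
    also have "\<dots> = ?P * sum ?r {0..n}"
      unfolding sum_distrib_left r sum_divide_distrib
      by (intro sum.cong refl)
         (simp add: vwp_term_mult_reversed_ratio[OF hp hq hnz(4-6,1-3) htA _ hd3 hd1 hd4])
    finally show ?thesis .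
  qed
qed

end
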